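(* For every prime $p\geq 17$, the group $PSL_2(p)$ does not satisfy the Amit–Vishne condition: there exist $g,h\in PSL_2(p)$ with $\langle g\rangle=\langle h\rangle$ such that no automorphism of $PSL_2(p)$ maps $g$ to $h$.
   Context: A finite group $G$ satisfies the Amit–Vishne condition if whenever $g,h\in G$ satisfy $\langle g\rangle=\langle h\rangle$, there is $\alpha\in\mathrm{Aut}(G)$ with $\alpha(g)=h$. *)

theory Defs
  imports "HOL-Algebra.Algebra"
begin

text \<open>2x2 matrices over Z/pZ, represented as quadruples (a,b,c,d) standing for
  the matrix [[a,b],[c,d]], with entries normalised to {0..<p}.\<close>

type_synonym mat2 = "int \<times> int \<times> int \<times> int"

definition mat2_mult :: "nat \<Rightarrow> mat2 \<Rightarrow> mat2 \<Rightarrow> mat2" where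
  "mat2_mult p A B = (case A of (a, b, c, d) \<Rightarrow> case B of (e, f, g, h) \<Rightarrow>
     ((a*e + b*g) mod int p, (a*f + b*h) mod int p,
      (c*e + d*g) mod int p, (c*f + d*h) mod int p))"

definition SL2_carrier :: "nat \<Rightarrow> mat2 set" where
  "SL2_carrier p = {(x, y, z, w). 0 \<le> x \<and> x < int p \<and> 0 \<le> y \<and> y < int p \<and>
      0 \<le> z \<and> z < int p \<and> 0 \<le> w \<and> w < int p \<and> (x*w - y*z) mod int p = 1}"

definition SL2 :: "nat \<Rightarrow> mat2 monoid" where
  "SL2 p = \<lparr>carrier = SL2_carrier p, monoid.mult = mat2_mult p, one = (1, 0, 0, 1)\<rparr>"

definition SL2_center :: "nat \<Rightarrow> mat2 set" where
  "SL2_center p = {(1, 0, 0, 1), (int p - 1, 0, 0, int p - 1)}"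

definition PSL2 :: "nat \<Rightarrow> mat2 set monoid" where
  "PSL2 p = SL2 p Mod SL2_center p"

definition amit_vishne :: "('a, 'b) monoid_scheme \<Rightarrow> bool" where
  "amit_vishne G \<longleftrightarrow> (\<forall>g \<in> carrier G. \<forall>h \<in> carrier G.
      generate G {g} = generate G {h} \<longrightarrow> (\<exists>\<alpha> \<in> iso G G. \<alpha> g = h))"

end

(*
  Instead of determining Aut(PSL_2(p)), traces (up to sign) are pinned down by properties that
  every automorphism preserves. Call x unipotent-like if x^3 and x^5 are nontrivial and x is
  conjugate to x^4. In PSL_2(p) this forces tr x = +-2: from tr x^4 = +-tr x the trace t is a root
  of (t -+ 2)(t +- 1)(t^2 +- t - 1), and the last two factors would make x^3 resp. x^5 trivial.
  A product u w of two unipotent-like elements with u w^-1 an involution then has trace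
  +-(tr u tr w - tr u w^-1) = +-4.

  The image g of G0 = [[3,1],[2,1]] = [[1,1],[0,1]] [[1,0],[2,1]] is such a product. Powers of G0
  are combinations a G0 + b I, and the only ones of determinant 1 and trace +-4 mod p are
  +-G0 and +-G0^-1. Since g^4 and g^6 are nontrivial, some power g^k with k prime to the order of
  g differs from g and g^-1 yet generates the same cyclic group, and no automorphism maps g to it.
*)

theory Submission
  imports Defs "HOL-Computational_Algebra.Primes"
begin

definition mat2_prod :: "mat2 \<Rightarrow> mat2 \<Rightarrow> mat2" where
  "mat2_prod A B = (case A of (a, b, c, d) \<Rightarrow> case B of (e, f, g, h) \<Rightarrow>
     (a*e + b*g, a*f + b*h, c*e + d*g, c*f + d*h))"

definition mat2_one :: mat2 where
  "mat2_one = (1, 0, 0, 1)"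

definition mat2_neg :: "mat2 \<Rightarrow> mat2" where
  "mat2_neg A = (case A of (a, b, c, d) \<Rightarrow> (-a, -b, -c, -d))"

definition mat2_adj :: "mat2 \<Rightarrow> mat2" where
  "mat2_adj A = (case A of (a, b, c, d) \<Rightarrow> (d, -b, -c, a))"

definition mat2_trace :: "mat2 \<Rightarrow> int" where
  "mat2_trace A = (case A of (a, b, c, d) \<Rightarrow> a + d)"

definition mat2_det :: "mat2 \<Rightarrow> int" where
  "mat2_det A = (case A of (a, b, c, d) \<Rightarrow> a * d - b * c)"

definition mat2_lin :: "int \<Rightarrow> int \<Rightarrow> mat2 \<Rightarrow> mat2" where
  "mat2_lin \<alpha> \<beta> A = (case A of (a, b, c, d) \<Rightarrow> (\<alpha> * a + \<beta>, \<alpha> * b, \<alpha> * c, \<alpha> * d + \<beta>))"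

primrec mat2_pow :: "mat2 \<Rightarrow> nat \<Rightarrow> mat2" where
  "mat2_pow A 0 = mat2_one"
| "mat2_pow A (Suc n) = mat2_prod (mat2_pow A n) A"

lemma mat2_prod_simp [simp]:
  "mat2_prod (a, b, c, d) (e, f, g, h) = (a*e + b*g, a*f + b*h, c*e + d*g, c*f + d*h)"
  by (simp add: mat2_prod_def)

lemma mat2_neg_simp [simp]: "mat2_neg (a, b, c, d) = (-a, -b, -c, -d)"
  by (simp add: mat2_neg_def)

lemma mat2_adj_simp [simp]: "mat2_adj (a, b, c, d) = (d, -b, -c, a)"
  by (simp add: mat2_adj_def)

lemma mat2_trace_simp [simp]: "mat2_trace (a, b, c, d) = a + d"
  by (simp add: mat2_trace_def)

lemma mat2_det_simp [simp]: "mat2_det (a, b, c, d) = a * d - b * c"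
  by (simp add: mat2_det_def)

lemma mat2_lin_simp [simp]:
  "mat2_lin \<alpha> \<beta> (a, b, c, d) = (\<alpha> * a + \<beta>, \<alpha> * b, \<alpha> * c, \<alpha> * d + \<beta>)"
  by (simp add: mat2_lin_def)

lemma mat2_lin_one_zero [simp]: "mat2_lin 1 0 A = A"
  by (cases A) simp

lemma mat2_prod_assoc: "mat2_prod (mat2_prod A B) C = mat2_prod A (mat2_prod B C)"
  by (cases A; cases B; cases C) (simp add: algebra_simps)

lemma mat2_prod_one_left [simp]: "mat2_prod mat2_one A = A"
  by (cases A) (simp add: mat2_one_def)

lemma mat2_prod_one_right [simp]: "mat2_prod A mat2_one = A"
  by (cases A) (simp add: mat2_one_def)

lemma mat2_prod_neg_left [simp]: "mat2_prod (mat2_neg A) B = mat2_neg (mat2_prod A B)"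
  by (cases A; cases B) simp

lemma mat2_prod_neg_right [simp]: "mat2_prod A (mat2_neg B) = mat2_neg (mat2_prod A B)"
  by (cases A; cases B) simp

lemma mat2_neg_neg [simp]: "mat2_neg (mat2_neg A) = A"
  by (cases A) simp

lemma mat2_det_prod: "mat2_det (mat2_prod A B) = mat2_det A * mat2_det B"
  by (cases A; cases B) (simp add: algebra_simps)

lemma mat2_det_adj [simp]: "mat2_det (mat2_adj A) = mat2_det A"
  by (cases A) (simp add: algebra_simps)

lemma mat2_trace_neg [simp]: "mat2_trace (mat2_neg A) = - mat2_trace A"
  by (cases A) simp

lemma mat2_prod_adj_left: "mat2_prod (mat2_adj A) A = mat2_lin 0 (mat2_det A) A"
  by (cases A) (simp add: algebra_simps)

lemma mat2_trace_conj: "mat2_trace (mat2_prod (mat2_prod C A) (mat2_adj C)) = mat2_det C * mat2_trace A"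
  by (cases C; cases A) (simp add: algebra_simps)

lemma mat2_trace_prod_adj:
  "mat2_trace (mat2_prod A B) = mat2_trace A * mat2_trace B - mat2_trace (mat2_prod A (mat2_adj B))"
  by (cases A; cases B) (simp add: algebra_simps)

lemma mat2_trace_lin: "mat2_trace (mat2_lin \<alpha> \<beta> A) = \<alpha> * mat2_trace A + 2 * \<beta>"
  by (cases A) (simp add: algebra_simps)

lemma mat2_det_lin:
  "mat2_det (mat2_lin \<alpha> \<beta> A) = \<alpha>^2 * mat2_det A + \<alpha> * \<beta> * mat2_trace A + \<beta>^2"
  by (cases A) (simp add: algebra_simps power2_eq_square)

lemma mat2_lin_prod_self:
  "mat2_prod (mat2_lin \<alpha> \<beta> A) A = mat2_lin (\<alpha> * mat2_trace A + \<beta>) (- \<alpha> * mat2_det A) A"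
  by (cases A) (simp add: algebra_simps)

lemma mat2_det_pow: "mat2_det (mat2_pow A n) = mat2_det A ^ n"
  by (induction n) (simp_all add: mat2_det_prod mat2_one_def)

text \<open>The Lucas sequence \<open>U\<^sub>n(t, D)\<close>; by Cayley--Hamilton it gives the coefficients of the
  powers of a matrix with trace \<open>t\<close> and determinant \<open>D\<close>.\<close>

fun lucas_U :: "int \<Rightarrow> int \<Rightarrow> nat \<Rightarrow> int" where
  "lucas_U t D 0 = 0"
| "lucas_U t D (Suc 0) = 1"
| "lucas_U t D (Suc (Suc n)) = t * lucas_U t D (Suc n) - D * lucas_U t D n"

lemma lucas_U_Suc:
  "0 < n \<Longrightarrow> lucas_U t D (Suc n) = t * lucas_U t D n - D * lucas_U t D (n - 1)"
  by (cases n) simp_all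

lemma mat2_pow_lucas:
  assumes "0 < n"
  shows "mat2_pow A n =
    mat2_lin (lucas_U (mat2_trace A) (mat2_det A) n)
             (- mat2_det A * lucas_U (mat2_trace A) (mat2_det A) (n - 1)) A"
  using assms
proof (induction n rule: nat_induct_non_zero)
  case 1
  show ?case by (cases A) (simp add: mat2_one_def)
next
  case (Suc n)
  then show ?case by (simp add: mat2_lin_prod_self lucas_U_Suc algebra_simps)
qed

lemma lucas_U_small:
  "lucas_U t D 2 = t" "lucas_U t D 3 = t^2 - D"
  "lucas_U t D 4 = t^3 - 2*t*D" "lucas_U t D 5 = t^4 - 3*t^2*D + D^2"
  by (simp_all add: numeral_eq_Suc power_Suc algebra_simps)

lemma mat2_trace_pow4:
  "mat2_trace (mat2_pow A 4) =
     mat2_trace A ^ 4 - 4 * mat2_trace A ^ 2 * mat2_det A + 2 * mat2_det A ^ 2"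
  unfolding mat2_pow_lucas[of 4, simplified] mat2_trace_lin lucas_U_small
  by Groebner_Basis.algebra

lemma mat2_pow_upper: "mat2_pow (1, b, 0, 1) n = (1, int n * b, 0, 1)"
  by (induction n) (simp_all add: mat2_one_def algebra_simps)

lemma mat2_pow_lower: "mat2_pow (1, 0, c, 1) n = (1, 0, int n * c, 1)"
  by (induction n) (simp_all add: mat2_one_def algebra_simps)

definition mat2_reduce :: "nat \<Rightarrow> mat2 \<Rightarrow> mat2" where
  "mat2_reduce p A = (case A of (a, b, c, d) \<Rightarrow> (a mod int p, b mod int p, c mod int p, d mod int p))"

lemma mat2_reduce_simp [simp]:
  "mat2_reduce p (a, b, c, d) = (a mod int p, b mod int p, c mod int p, d mod int p)"
  by (simp add: mat2_reduce_def)

lemma mat2_reduce_eq_iff: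
  "mat2_reduce p (a, b, c, d) = mat2_reduce p (e, f, g, h) \<longleftrightarrow>
     int p dvd a - e \<and> int p dvd b - f \<and> int p dvd c - g \<and> int p dvd d - h"
  by (simp add: mod_eq_dvd_iff)

lemma mat2_reduce_idem [simp]: "mat2_reduce p (mat2_reduce p A) = mat2_reduce p A"
  by (cases A) simp

lemma mod_sum_prod_left: "((a::int) mod n * x + b mod n * y) mod n = (a * x + b * y) mod n"
  by (metis mod_add_eq mod_mult_left_eq)

lemma mod_sum_prod_right: "((a::int) * (x mod n) + b * (y mod n)) mod n = (a * x + b * y) mod n"
  by (metis mod_add_eq mod_mult_right_eq)

lemma mat2_reduce_prod_left [simp]:
  "mat2_reduce p (mat2_prod (mat2_reduce p A) B) = mat2_reduce p (mat2_prod A B)"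
  by (cases A; cases B) (simp add: mod_sum_prod_left)

lemma mat2_reduce_prod_right [simp]:
  "mat2_reduce p (mat2_prod A (mat2_reduce p B)) = mat2_reduce p (mat2_prod A B)"
  by (cases A; cases B) (simp add: mod_sum_prod_right)

lemma mat2_reduce_neg [simp]:
  "mat2_reduce p (mat2_neg (mat2_reduce p A)) = mat2_reduce p (mat2_neg A)"
  by (cases A) (simp add: mod_minus_eq)

lemma mat2_reduce_neg_prod_left [simp]:
  "mat2_reduce p (mat2_neg (mat2_prod (mat2_reduce p A) B)) = mat2_reduce p (mat2_neg (mat2_prod A B))"
  by (metis mat2_reduce_neg mat2_reduce_prod_left)

lemma mat2_reduce_neg_prod_right [simp]:
  "mat2_reduce p (mat2_neg (mat2_prod A (mat2_reduce p B))) = mat2_reduce p (mat2_neg (mat2_prod A B))"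
  by (metis mat2_reduce_neg mat2_reduce_prod_right)

lemma mat2_det_reduce: "int p dvd mat2_det (mat2_reduce p A) - mat2_det A"
  by (cases A) (simp add: mod_eq_dvd_iff [symmetric], metis mod_diff_eq mod_mult_eq)

lemma mat2_trace_reduce_eq:
  "mat2_reduce p A = mat2_reduce p B \<Longrightarrow> int p dvd mat2_trace A - mat2_trace B"
  by (cases A; cases B) (simp add: mod_eq_dvd_iff [symmetric], metis mod_add_eq)

lemma dvd_mult_minus_one:
  assumes "(n::int) dvd a - 1" and "n dvd b - 1"
  shows "n dvd a * b - 1"
proof -
  have "a * b - 1 = (a - 1) * b + (b - 1)" by (simp add: algebra_simps)
  with assms show ?thesis by (metis dvd_add dvd_mult2)
qed

lemma dvd_diff_cong:
  assumes "(n::int) dvd x - y"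
  shows "n dvd x - e \<longleftrightarrow> n dvd y - e"
proof -
  have "x - e = (x - y) + (y - e)" by simp
  then show ?thesis using assms by (metis dvd_add_right_iff)
qed

lemma prime_dvd_square_diff_iff:
  "Factorial_Ring.prime (n::int) \<Longrightarrow> n dvd x^2 - c^2 \<longleftrightarrow> n dvd x - c \<or> n dvd x + c"
  by (auto simp: power2_eq_square square_diff_square_factored prime_dvd_mult_iff)

lemma inverse_of_two_mod:
  assumes "odd p"
  obtains q :: int where "int p dvd 2 * q - 1"
proof -
  from assms obtain m where "p = 2 * m + 1" using oddE by blast
  then have "int p dvd 2 * int (m + 1) - 1" by simp
  then show ?thesis using that by blast
qed

lemma mat2_det_reduce_one_iff:
  "int p dvd mat2_det (mat2_reduce p A) - 1 \<longleftrightarrow> int p dvd mat2_det A - 1"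
  by (rule dvd_diff_cong[OF mat2_det_reduce])

lemma mat2_det_prod_one:
  "int p dvd mat2_det A - 1 \<Longrightarrow> int p dvd mat2_det B - 1 \<Longrightarrow>
     int p dvd mat2_det (mat2_prod A B) - 1"
  by (simp add: mat2_det_prod dvd_mult_minus_one)

lemma SL2_carrier_iff:
  assumes "1 < p"
  shows "A \<in> SL2_carrier p \<longleftrightarrow> mat2_reduce p A = A \<and> int p dvd mat2_det A - 1"
proof -
  obtain x y z w where A: "A = (x, y, z, w)" by (cases A)
  have "(x*w - y*z) mod int p = 1 \<longleftrightarrow> int p dvd (x*w - y*z) - 1"
    using assms mod_eq_dvd_iff[of "x*w - y*z" "int p" 1] by simp
  moreover have "m mod int p = m \<longleftrightarrow> 0 \<le> m \<and> m < int p" for m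
    using assms by (metis mod_pos_pos_trivial pos_mod_bound pos_mod_sign of_nat_0_less_iff
        gr_implies_not0 neq0_conv)
  ultimately show ?thesis by (auto simp: A SL2_carrier_def)
qed

lemma SL2_mult [simp]: "x \<otimes>\<^bsub>SL2 p\<^esub> y = mat2_reduce p (mat2_prod x y)"
  by (cases x; cases y) (simp add: SL2_def mat2_mult_def)

lemma SL2_carrier [simp]: "carrier (SL2 p) = SL2_carrier p"
  by (simp add: SL2_def)

lemma SL2_one [simp]: "\<one>\<^bsub>SL2 p\<^esub> = mat2_one"
  by (simp add: SL2_def mat2_one_def)

lemma finite_SL2_carrier: "finite (SL2_carrier p)"
proof (rule finite_subset)
  show "SL2_carrier p \<subseteq> {0..<int p} \<times> {0..<int p} \<times> {0..<int p} \<times> {0..<int p}"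
    unfolding SL2_carrier_def by auto
qed auto

context
  fixes p :: nat
  assumes p: "1 < p"
begin

lemma mat2_reduce_one [simp]: "mat2_reduce p mat2_one = mat2_one"
  using p by (simp add: mat2_one_def mod_pos_pos_trivial)

lemma mat2_reduce_scalar_one:
  "int p dvd s - 1 \<Longrightarrow> mat2_reduce p (mat2_lin 0 s A) = mat2_one"
  using mat2_reduce_one by (cases A) (simp add: mat2_one_def mod_eq_dvd_iff [symmetric])

lemma group_SL2: "group (SL2 p)"
proof (rule groupI)
  fix x y assume "x \<in> carrier (SL2 p)" "y \<in> carrier (SL2 p)"
  then show "x \<otimes>\<^bsub>SL2 p\<^esub> y \<in> carrier (SL2 p)"
    by (simp add: SL2_carrier_iff[OF p] mat2_det_reduce_one_iff mat2_det_prod_one)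
next
  show "\<one>\<^bsub>SL2 p\<^esub> \<in> carrier (SL2 p)"
    using mat2_reduce_one by (simp add: SL2_carrier_iff[OF p] mat2_one_def)
next
  fix x y z
  show "x \<otimes>\<^bsub>SL2 p\<^esub> y \<otimes>\<^bsub>SL2 p\<^esub> z = x \<otimes>\<^bsub>SL2 p\<^esub> (y \<otimes>\<^bsub>SL2 p\<^esub> z)"
    by (simp add: mat2_prod_assoc)
next
  fix x assume "x \<in> carrier (SL2 p)"
  then show "\<one>\<^bsub>SL2 p\<^esub> \<otimes>\<^bsub>SL2 p\<^esub> x = x"
    by (simp add: SL2_carrier_iff[OF p])
next
  fix x assume "x \<in> carrier (SL2 p)"
  then have det: "int p dvd mat2_det x - 1"
    by (simp add: SL2_carrier_iff[OF p])
  have "mat2_reduce p (mat2_adj x) \<in> carrier (SL2 p)"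
    using det by (simp add: SL2_carrier_iff[OF p] mat2_det_reduce_one_iff)
  moreover have "mat2_reduce p (mat2_adj x) \<otimes>\<^bsub>SL2 p\<^esub> x = \<one>\<^bsub>SL2 p\<^esub>"
    using det by (simp add: mat2_prod_adj_left mat2_reduce_scalar_one)
  ultimately show "\<exists>y\<in>carrier (SL2 p). y \<otimes>\<^bsub>SL2 p\<^esub> x = \<one>\<^bsub>SL2 p\<^esub>"
    by blast
qed

end

definition psl_coset :: "nat \<Rightarrow> mat2 \<Rightarrow> mat2 set" where
  "psl_coset p A = {mat2_reduce p A, mat2_reduce p (mat2_neg A)}"

lemma psl_coset_reduce [simp]: "psl_coset p (mat2_reduce p A) = psl_coset p A"
  by (simp add: psl_coset_def)

lemma psl_coset_neg [simp]: "psl_coset p (mat2_neg A) = psl_coset p A"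
  by (auto simp: psl_coset_def)

lemma psl_coset_eq_iff:
  "psl_coset p A = psl_coset p B \<longleftrightarrow>
     mat2_reduce p A = mat2_reduce p B \<or> mat2_reduce p A = mat2_reduce p (mat2_neg B)"
proof
  assume "psl_coset p A = psl_coset p B"
  then have "mat2_reduce p A \<in> psl_coset p B" by (metis insertI1 psl_coset_def)
  then show "mat2_reduce p A = mat2_reduce p B \<or> mat2_reduce p A = mat2_reduce p (mat2_neg B)"
    by (simp add: psl_coset_def)
next
  assume "mat2_reduce p A = mat2_reduce p B \<or> mat2_reduce p A = mat2_reduce p (mat2_neg B)"
  then show "psl_coset p A = psl_coset p B"
    by (metis psl_coset_neg psl_coset_reduce)
qed

lemma psl_coset_eq_imp_trace:
  assumes "psl_coset p A = psl_coset p B"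
  shows "int p dvd mat2_trace A - mat2_trace B \<or> int p dvd mat2_trace A + mat2_trace B"
  using mat2_trace_reduce_eq[of p A B] mat2_trace_reduce_eq[of p A "mat2_neg B"] assms
  by (auto simp: psl_coset_eq_iff)

context
  fixes p :: nat
  assumes p: "1 < p"
begin

lemma SL2_center_eq: "SL2_center p = psl_coset p mat2_one"
proof -
  have "(-1::int) mod int p = (int p - 1) mod int p" by (simp add: mod_eq_dvd_iff)
  also have "\<dots> = int p - 1" using p by (intro mod_pos_pos_trivial) auto
  finally show ?thesis
    using mat2_reduce_one[OF p] by (simp add: SL2_center_def psl_coset_def mat2_one_def)
qed

lemma r_coset_SL2_center:
  "A \<in> SL2_carrier p \<Longrightarrow> SL2_center p #>\<^bsub>SL2 p\<^esub> A = psl_coset p A"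
  using SL2_carrier_iff[OF p, of A]
  by (auto simp: r_coset_def SL2_center_eq psl_coset_def)

lemma l_coset_SL2_center:
  "A \<in> SL2_carrier p \<Longrightarrow> A <#\<^bsub>SL2 p\<^esub> SL2_center p = psl_coset p A"
  using SL2_carrier_iff[OF p, of A]
  by (auto simp: l_coset_def SL2_center_eq psl_coset_def)

lemma subgroup_SL2_center: "subgroup (SL2_center p) (SL2 p)"
proof -
  interpret SL2: group "SL2 p" by (rule group_SL2[OF p])
  define J where "J = mat2_reduce p (mat2_neg mat2_one)"
  have center: "SL2_center p = {mat2_one, J}"
    by (simp add: SL2_center_eq psl_coset_def J_def mat2_reduce_one[OF p])
  have J: "J \<in> carrier (SL2 p)"
    unfolding J_def SL2_carrier SL2_carrier_iff[OF p] mat2_det_reduce_one_iff by (simp add: mat2_one_def)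
  have JJ: "J \<otimes>\<^bsub>SL2 p\<^esub> J = \<one>\<^bsub>SL2 p\<^esub>"
    by (simp add: J_def mat2_reduce_one[OF p])
  show ?thesis
  proof (rule SL2.subgroupI)
    show "SL2_center p \<subseteq> carrier (SL2 p)"
      using J SL2.one_closed by (auto simp: center)
  next
    fix a assume "a \<in> SL2_center p"
    then show "inv\<^bsub>SL2 p\<^esub> a \<in> SL2_center p"
      using SL2.inv_equality[OF JJ J J] SL2.inv_one by (auto simp: center)
  next
    fix a b assume "a \<in> SL2_center p" "b \<in> SL2_center p"
    then show "a \<otimes>\<^bsub>SL2 p\<^esub> b \<in> SL2_center p"
      using JJ SL2.l_one[OF J] SL2.r_one[OF J] SL2.l_one[OF SL2.one_closed] by (auto simp: center)
  qed (simp add: center)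
qed

lemma normal_SL2_center: "SL2_center p \<lhd> SL2 p"
  by (simp add: normal_def normal_axioms_def subgroup_SL2_center group_SL2[OF p]
      r_coset_SL2_center l_coset_SL2_center)

lemma group_PSL2: "group (PSL2 p)"
  unfolding PSL2_def by (rule normal.factorgroup_is_group[OF normal_SL2_center])

lemma PSL2_carrier: "carrier (PSL2 p) = psl_coset p ` SL2_carrier p"
  by (auto simp: PSL2_def FactGroup_def RCOSETS_def r_coset_SL2_center)

lemma finite_PSL2_carrier: "finite (carrier (PSL2 p))"
  by (simp add: PSL2_carrier finite_SL2_carrier)

lemma PSL2_mult [simp]: "psl_coset p A \<otimes>\<^bsub>PSL2 p\<^esub> psl_coset p B = psl_coset p (mat2_prod A B)"
  by (auto simp: PSL2_def FactGroup_def set_mult_def psl_coset_def)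

lemma PSL2_one: "\<one>\<^bsub>PSL2 p\<^esub> = psl_coset p mat2_one"
  by (simp add: PSL2_def FactGroup_def SL2_center_eq)

lemma psl_coset_in_carrier:
  "int p dvd mat2_det A - 1 \<Longrightarrow> psl_coset p A \<in> carrier (PSL2 p)"
  unfolding PSL2_carrier
  by (rule image_eqI[of _ _ "mat2_reduce p A"])
     (simp_all add: SL2_carrier_iff[OF p] mat2_det_reduce_one_iff)

lemma PSL2_carrier_obtain:
  assumes "x \<in> carrier (PSL2 p)"
  obtains A where "x = psl_coset p A" and "int p dvd mat2_det A - 1"
  using assms SL2_carrier_iff[OF p] by (auto simp: PSL2_carrier)

lemma PSL2_inv:
  assumes "int p dvd mat2_det A - 1"
  shows "inv\<^bsub>PSL2 p\<^esub> (psl_coset p A) = psl_coset p (mat2_adj A)"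
proof -
  interpret PSL2: group "PSL2 p" by (rule group_PSL2)
  have "psl_coset p (mat2_prod (mat2_adj A) A) = psl_coset p mat2_one"
    using mat2_reduce_scalar_one[OF p assms]
    by (metis mat2_prod_adj_left psl_coset_reduce)
  then show ?thesis
    using assms by (intro PSL2.inv_equality)
      (simp_all add: PSL2_one psl_coset_in_carrier)
qed

lemma PSL2_pow: "psl_coset p A [^]\<^bsub>PSL2 p\<^esub> (n::nat) = psl_coset p (mat2_pow A n)"
  by (induction n) (simp_all add: PSL2_one)

lemma psl_coset_eq_one_iff:
  "psl_coset p (a, b, c, d) = \<one>\<^bsub>PSL2 p\<^esub> \<longleftrightarrow> int p dvd b \<and> int p dvd c \<and>
     (int p dvd a - 1 \<and> int p dvd d - 1 \<or> int p dvd a + 1 \<and> int p dvd d + 1)"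
  unfolding PSL2_one psl_coset_eq_iff mat2_one_def mat2_neg_simp mat2_reduce_eq_iff by auto

end

lemma psl_coset_lin_eq_one:
  assumes "1 < p" and "int p dvd \<alpha>" and "int p dvd \<beta> - 1 \<or> int p dvd \<beta> + 1"
  shows "psl_coset p (mat2_lin \<alpha> \<beta> A) = \<one>\<^bsub>PSL2 p\<^esub>"
proof -
  obtain a b c d where A: "A = (a, b, c, d)" by (cases A)
  have "int p dvd \<alpha> * x + \<beta> - 1" if "int p dvd \<beta> - 1" for x
    using assms(2) that by (metis add_diff_eq dvd_add dvd_mult2)
  moreover have "int p dvd \<alpha> * x + \<beta> + 1" if "int p dvd \<beta> + 1" for x
    using assms(2) that by (metis add.assoc dvd_add dvd_mult2)
  ultimately show ?thesis
    using assms(2,3) by (auto simp: A psl_coset_eq_one_iff[OF assms(1)])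
qed

lemma psl_coset_pow_eq_one_lucas:
  assumes "1 < p" and "0 < n"
    and "int p dvd lucas_U (mat2_trace A) (mat2_det A) n"
    and "int p dvd mat2_det A * lucas_U (mat2_trace A) (mat2_det A) (n - 1) + 1 \<or>
         int p dvd mat2_det A * lucas_U (mat2_trace A) (mat2_det A) (n - 1) - 1"
  shows "psl_coset p A [^]\<^bsub>PSL2 p\<^esub> n = \<one>\<^bsub>PSL2 p\<^esub>"
proof -
  have "int p dvd - x - 1 \<or> int p dvd - x + 1" if "int p dvd x + 1 \<or> int p dvd x - 1" for x :: int
    using that dvd_minus_iff[of "int p" "x + 1"] dvd_minus_iff[of "int p" "x - 1"] by auto
  then show ?thesis
    using assms by (simp add: PSL2_pow mat2_pow_lucas psl_coset_lin_eq_one)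
qed

lemma psl_coset_lin_cong:
  assumes "int p dvd \<alpha> - \<alpha>' \<and> int p dvd \<beta> - \<beta>' \<or> int p dvd \<alpha> + \<alpha>' \<and> int p dvd \<beta> + \<beta>'"
  shows "psl_coset p (mat2_lin \<alpha> \<beta> A) = psl_coset p (mat2_lin \<alpha>' \<beta>' A)"
proof -
  obtain a b c d where A: "A = (a, b, c, d)" by (cases A)
  have "int p dvd \<alpha> * x + \<beta> - (\<alpha>' * x + \<beta>')" "int p dvd \<alpha> * x - \<alpha>' * x"
    if "int p dvd \<alpha> - \<alpha>'" "int p dvd \<beta> - \<beta>'" for x
    using that unfolding dvd_def by Groebner_Basis.algebra+
  moreover have "int p dvd \<alpha> * x + \<beta> - - (\<alpha>' * x + \<beta>')" "int p dvd \<alpha> * x - - (\<alpha>' * x)"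
    if "int p dvd \<alpha> + \<alpha>'" "int p dvd \<beta> + \<beta>'" for x
    using that unfolding dvd_def by Groebner_Basis.algebra+
  ultimately show ?thesis
    using assms unfolding psl_coset_eq_iff A mat2_lin_simp mat2_neg_simp mat2_reduce_eq_iff by blast
qed

section \<open>Automorphism-invariant properties\<close>

definition unipotent_like :: "('a, 'b) monoid_scheme \<Rightarrow> 'a \<Rightarrow> bool" where
  "unipotent_like G x \<longleftrightarrow> x \<in> carrier G \<and>
     x [^]\<^bsub>G\<^esub> (3::nat) \<noteq> \<one>\<^bsub>G\<^esub> \<and> x [^]\<^bsub>G\<^esub> (5::nat) \<noteq> \<one>\<^bsub>G\<^esub> \<and>
     (\<exists>c\<in>carrier G. c \<otimes>\<^bsub>G\<^esub> x \<otimes>\<^bsub>G\<^esub> inv\<^bsub>G\<^esub> c = x [^]\<^bsub>G\<^esub> (4::nat))"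

definition unipotent_pair_product :: "('a, 'b) monoid_scheme \<Rightarrow> 'a \<Rightarrow> bool" where
  "unipotent_pair_product G g \<longleftrightarrow> (\<exists>u w. unipotent_like G u \<and> unipotent_like G w \<and>
     g = u \<otimes>\<^bsub>G\<^esub> w \<and> u \<otimes>\<^bsub>G\<^esub> inv\<^bsub>G\<^esub> w \<noteq> \<one>\<^bsub>G\<^esub> \<and>
     (u \<otimes>\<^bsub>G\<^esub> inv\<^bsub>G\<^esub> w) [^]\<^bsub>G\<^esub> (2::nat) = \<one>\<^bsub>G\<^esub>)"

context group_hom
begin

lemma inj_hom_eq_one_iff:
  assumes "inj_on h (carrier G)" and "x \<in> carrier G"
  shows "h x = \<one>\<^bsub>H\<^esub> \<longleftrightarrow> x = \<one>"
  using assms inj_onD[OF assms(1), of x \<one>] by auto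

lemma unipotent_like_inj_image:
  assumes inj: "inj_on h (carrier G)" and x: "unipotent_like G x"
  shows "unipotent_like H (h x)"
proof -
  from x obtain c where c: "c \<in> carrier G" and x_carrier: "x \<in> carrier G"
    and conj: "c \<otimes> x \<otimes> inv c = x [^] (4::nat)"
    unfolding unipotent_like_def by blast
  have "h c \<otimes>\<^bsub>H\<^esub> h x \<otimes>\<^bsub>H\<^esub> inv\<^bsub>H\<^esub> h c = h x [^]\<^bsub>H\<^esub> (4::nat)"
    using c x_carrier by (simp add: conj [symmetric] flip: hom_nat_pow)
  moreover have "h x [^]\<^bsub>H\<^esub> n \<noteq> \<one>\<^bsub>H\<^esub>" if "x [^] n \<noteq> \<one>" for n :: nat
    using that x_carrier inj_hom_eq_one_iff[OF inj, of "x [^] n"] by (simp add: hom_nat_pow)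
  ultimately show ?thesis
    using x c unfolding unipotent_like_def by auto
qed

lemma unipotent_pair_product_inj_image:
  assumes inj: "inj_on h (carrier G)" and g: "unipotent_pair_product G g"
  shows "unipotent_pair_product H (h g)"
proof -
  from g obtain u w where u: "unipotent_like G u" and w: "unipotent_like G w"
    and g_eq: "g = u \<otimes> w" and z: "u \<otimes> inv w \<noteq> \<one>" "(u \<otimes> inv w) [^] (2::nat) = \<one>"
    unfolding unipotent_pair_product_def by blast
  have carrier: "u \<in> carrier G" "w \<in> carrier G"
    using u w by (simp_all add: unipotent_like_def)
  then have hz: "h u \<otimes>\<^bsub>H\<^esub> inv\<^bsub>H\<^esub> h w = h (u \<otimes> inv w)"
    by simp
  have uw: "u \<otimes> inv w \<in> carrier G"
    using carrier by simp
  then have "h u \<otimes>\<^bsub>H\<^esub> inv\<^bsub>H\<^esub> h w \<noteq> \<one>\<^bsub>H\<^esub>"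
    unfolding hz using z(1) inj_hom_eq_one_iff[OF inj] by blast
  moreover have "(h u \<otimes>\<^bsub>H\<^esub> inv\<^bsub>H\<^esub> h w) [^]\<^bsub>H\<^esub> (2::nat) = \<one>\<^bsub>H\<^esub>"
    using hom_nat_pow[OF uw, of 2] z(2) carrier by simp
  moreover have "h g = h u \<otimes>\<^bsub>H\<^esub> h w"
    using g_eq carrier by simp
  ultimately show ?thesis
    unfolding unipotent_pair_product_def
    using unipotent_like_inj_image[OF inj u] unipotent_like_inj_image[OF inj w]
    by (intro exI[of _ "h u"] exI[of _ "h w"] conjI)
qed

end

section \<open>Traces of unipotent-like elements and their products\<close>

lemma quartic_trace_cong:
  fixes n t D e :: int
  assumes "n dvd D - 1" and "n dvd e - 1"
  shows "n dvd e * t - (t^4 - 4*t^2*D + 2*D^2) \<Longrightarrow> n dvd (t - 2) * (t + 1) * (t^2 + t - 1)"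
    and "n dvd e * t + (t^4 - 4*t^2*D + 2*D^2) \<Longrightarrow> n dvd (t + 2) * (t - 1) * (t^2 - t - 1)"
  using assms unfolding dvd_def by Groebner_Basis.algebra+

lemma cube_coefficients_cong:
  fixes n t D :: int
  assumes "n dvd D - 1"
  shows "n dvd t + 1 \<Longrightarrow> n dvd t^2 - D" "n dvd t + 1 \<Longrightarrow> n dvd D * t + 1"
    and "n dvd t - 1 \<Longrightarrow> n dvd t^2 - D" "n dvd t - 1 \<Longrightarrow> n dvd D * t - 1"
  using assms unfolding dvd_def by Groebner_Basis.algebra+

lemma fifth_power_coefficients_cong:
  fixes n t D :: int
  assumes "n dvd D - 1"
  shows "n dvd t^2 + t - 1 \<Longrightarrow> n dvd t^4 - 3*t^2*D + D^2"
    and "n dvd t^2 + t - 1 \<Longrightarrow> n dvd D * (t^3 - 2*t*D) + 1"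
    and "n dvd t^2 - t - 1 \<Longrightarrow> n dvd t^4 - 3*t^2*D + D^2"
    and "n dvd t^2 - t - 1 \<Longrightarrow> n dvd D * (t^3 - 2*t*D) - 1"
  using assms unfolding dvd_def by Groebner_Basis.algebra+

lemma diagonal_det_one_cong:
  fixes n a b c d :: int
  assumes "n dvd a * d - b * c - 1" and "n dvd b" "n dvd c" "n dvd a - d"
  shows "n dvd (a - 1) * (a + 1)"
  using assms unfolding dvd_def by Groebner_Basis.algebra

lemma unipotent_like_trace:
  assumes p: "Factorial_Ring.prime p" and det: "int p dvd mat2_det Q - 1"
    and unip: "unipotent_like (PSL2 p) (psl_coset p Q)"
  shows "int p dvd mat2_trace Q - 2 \<or> int p dvd mat2_trace Q + 2"
proof -
  have p1: "1 < p" and p_int: "Factorial_Ring.prime (int p)"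
    using p prime_gt_1_nat by auto
  define t D where "t = mat2_trace Q" and "D = mat2_det Q"
  have D: "int p dvd D - 1" using det by (simp add: D_def)
  from unip obtain c where c: "c \<in> carrier (PSL2 p)"
    and conj: "c \<otimes>\<^bsub>PSL2 p\<^esub> psl_coset p Q \<otimes>\<^bsub>PSL2 p\<^esub> inv\<^bsub>PSL2 p\<^esub> c =
               psl_coset p Q [^]\<^bsub>PSL2 p\<^esub> (4::nat)"
    and pow3: "psl_coset p Q [^]\<^bsub>PSL2 p\<^esub> (3::nat) \<noteq> \<one>\<^bsub>PSL2 p\<^esub>"
    and pow5: "psl_coset p Q [^]\<^bsub>PSL2 p\<^esub> (5::nat) \<noteq> \<one>\<^bsub>PSL2 p\<^esub>"
    unfolding unipotent_like_def by blast
  obtain C where C: "c = psl_coset p C" and det_C: "int p dvd mat2_det C - 1"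
    using PSL2_carrier_obtain[OF p1 c] .
  have conj_eq: "psl_coset p (mat2_prod (mat2_prod C Q) (mat2_adj C)) = psl_coset p (mat2_pow Q 4)"
    using conj by (simp add: C PSL2_inv[OF p1 det_C] PSL2_mult[OF p1] PSL2_pow[OF p1])
  have "int p dvd mat2_det C * t - (t^4 - 4*t^2*D + 2*D^2) \<or>
             int p dvd mat2_det C * t + (t^4 - 4*t^2*D + 2*D^2)"
    using psl_coset_eq_imp_trace[OF conj_eq] by (simp add: mat2_trace_conj mat2_trace_pow4 t_def D_def)
  then have "int p dvd t - 2 \<or> int p dvd t + 1 \<or> int p dvd t^2 + t - 1 \<or>
             int p dvd t + 2 \<or> int p dvd t - 1 \<or> int p dvd t^2 - t - 1"
    using quartic_trace_cong[OF D det_C] by (auto simp: prime_dvd_mult_iff[OF p_int])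
  moreover have "\<not> int p dvd t + 1" "\<not> int p dvd t - 1"
    using pow3 cube_coefficients_cong[OF D]
    by (auto simp: psl_coset_pow_eq_one_lucas[OF p1] lucas_U_small t_def D_def)
  moreover have "\<not> int p dvd t^2 + t - 1" "\<not> int p dvd t^2 - t - 1"
    using pow5 fifth_power_coefficients_cong[OF D]
    by (auto simp: psl_coset_pow_eq_one_lucas[OF p1] lucas_U_small t_def D_def)
  ultimately show ?thesis by (auto simp: t_def)
qed

lemma involution_trace:
  assumes p: "Factorial_Ring.prime p" and det: "int p dvd mat2_det Z - 1"
    and ne: "psl_coset p Z \<noteq> \<one>\<^bsub>PSL2 p\<^esub>"
    and sq: "psl_coset p Z [^]\<^bsub>PSL2 p\<^esub> (2::nat) = \<one>\<^bsub>PSL2 p\<^esub>"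
  shows "int p dvd mat2_trace Z"
proof (rule ccontr)
  assume t: "\<not> int p dvd mat2_trace Z"
  have p1: "1 < p" and p_int: "Factorial_Ring.prime (int p)"
    using p prime_gt_1_nat by auto
  obtain a b c d where Z: "Z = (a, b, c, d)" by (cases Z)
  have "psl_coset p (mat2_lin (a + d) (- mat2_det Z) Z) = \<one>\<^bsub>PSL2 p\<^esub>"
    using sq by (simp add: PSL2_pow[OF p1] mat2_pow_lucas lucas_U_small Z)
  then have tb: "int p dvd (a + d) * b" and tc: "int p dvd (a + d) * c"
    and "int p dvd (a + d) * a + (b * c - a * d) - 1 \<and> int p dvd (a + d) * d + (b * c - a * d) - 1 \<or>
         int p dvd (a + d) * a + (b * c - a * d) + 1 \<and> int p dvd (a + d) * d + (b * c - a * d) + 1"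
    by (simp_all add: Z psl_coset_eq_one_iff[OF p1])
  then have "int p dvd ((a + d) * a + (b * c - a * d) - 1) - ((a + d) * d + (b * c - a * d) - 1) \<or>
             int p dvd ((a + d) * a + (b * c - a * d) + 1) - ((a + d) * d + (b * c - a * d) + 1)"
    by (meson dvd_diff)
  then have tad: "int p dvd (a + d) * (a - d)"
    by (auto simp: algebra_simps)
  have "\<not> int p dvd a + d" using t by (simp add: Z)
  then have "int p dvd b" "int p dvd c" "int p dvd a - d"
    using tb tc tad by (simp_all add: prime_dvd_mult_iff[OF p_int])
  moreover from this have "int p dvd (a - 1) * (a + 1)"
    using diagonal_det_one_cong[of "int p" a d b c] det by (simp add: Z)
  ultimately have "psl_coset p Z = \<one>\<^bsub>PSL2 p\<^esub>"
    using dvd_diff_cong[of "int p" a d 1] dvd_diff_cong[of "int p" a d "-1"]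
    by (auto simp: Z psl_coset_eq_one_iff[OF p1] prime_dvd_mult_iff[OF p_int])
  with ne show False ..
qed

lemma trace_product_cong:
  fixes n x y z h :: int
  assumes "n dvd x^2 - 2^2" "n dvd y^2 - 2^2" "n dvd z" "n dvd h^2 - (x * y - z)^2"
  shows "n dvd h^2 - 4^2"
  using assms unfolding dvd_def by Groebner_Basis.algebra

lemma unipotent_pair_product_trace:
  assumes p: "Factorial_Ring.prime p" and det: "int p dvd mat2_det H - 1"
    and prod: "unipotent_pair_product (PSL2 p) (psl_coset p H)"
  shows "int p dvd mat2_trace H - 4 \<or> int p dvd mat2_trace H + 4"
proof -
  have p1: "1 < p" and p_int: "Factorial_Ring.prime (int p)"
    using p prime_gt_1_nat by auto
  from prod obtain u w where u: "unipotent_like (PSL2 p) u" and w: "unipotent_like (PSL2 p) w"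
    and H: "psl_coset p H = u \<otimes>\<^bsub>PSL2 p\<^esub> w"
    and z: "u \<otimes>\<^bsub>PSL2 p\<^esub> inv\<^bsub>PSL2 p\<^esub> w \<noteq> \<one>\<^bsub>PSL2 p\<^esub>"
      "(u \<otimes>\<^bsub>PSL2 p\<^esub> inv\<^bsub>PSL2 p\<^esub> w) [^]\<^bsub>PSL2 p\<^esub> (2::nat) = \<one>\<^bsub>PSL2 p\<^esub>"
    unfolding unipotent_pair_product_def by blast
  obtain U where U: "u = psl_coset p U" and det_U: "int p dvd mat2_det U - 1"
    using PSL2_carrier_obtain[OF p1] u unfolding unipotent_like_def by blast
  obtain W where W: "w = psl_coset p W" and det_W: "int p dvd mat2_det W - 1"
    using PSL2_carrier_obtain[OF p1] w unfolding unipotent_like_def by blast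
  define Z where "Z = mat2_prod U (mat2_adj W)"
  have "u \<otimes>\<^bsub>PSL2 p\<^esub> inv\<^bsub>PSL2 p\<^esub> w = psl_coset p Z"
    by (simp add: U W Z_def PSL2_inv[OF p1 det_W] PSL2_mult[OF p1])
  moreover have "int p dvd mat2_det Z - 1"
    using det_U det_W by (simp add: Z_def mat2_det_prod dvd_mult_minus_one)
  ultimately have tr_Z: "int p dvd mat2_trace Z"
    using involution_trace[OF p] z by simp
  have "int p dvd mat2_trace U ^ 2 - 2^2" "int p dvd mat2_trace W ^ 2 - 2^2"
    unfolding prime_dvd_square_diff_iff[OF p_int]
    using unipotent_like_trace[OF p det_U] unipotent_like_trace[OF p det_W] u w U W by simp_all
  moreover have "psl_coset p H = psl_coset p (mat2_prod U W)"
    by (simp add: H U W PSL2_mult[OF p1])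
  then have "int p dvd mat2_trace H ^ 2 - (mat2_trace U * mat2_trace W - mat2_trace Z) ^ 2"
    using psl_coset_eq_imp_trace
    by (simp add: prime_dvd_square_diff_iff[OF p_int] Z_def flip: mat2_trace_prod_adj)
  ultimately show ?thesis
    using trace_product_cong tr_Z prime_dvd_square_diff_iff[OF p_int] by blast
qed

definition G0 :: mat2 where
  "G0 = (3, 1, 2, 1)"

context
  fixes p :: nat
  assumes p: "Factorial_Ring.prime p" and p5: "5 < p"
begin

lemma unipotent_like_upper:
  assumes b: "\<not> int p dvd b"
  shows "unipotent_like (PSL2 p) (psl_coset p (1, b, 0, 1))"
proof -
  have p1: "1 < p" and p_int: "Factorial_Ring.prime (int p)"
    using p prime_gt_1_nat by auto
  have "odd p" using p p5 prime_odd_nat by auto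
  then obtain q where q: "int p dvd 2 * q - 1" by (rule inverse_of_two_mod)
  have "\<not> int p dvd int n * b" if "0 < n" "n < 6" for n :: nat
    using b zdvd_not_zless[of "int n" "int p"] that p5
    by (simp add: prime_dvd_mult_iff[OF p_int])
  then have pow_ne: "psl_coset p (1, b, 0, 1) [^]\<^bsub>PSL2 p\<^esub> n \<noteq> \<one>\<^bsub>PSL2 p\<^esub>"
    if "0 < n" "n < 6" for n :: nat
    using that by (simp add: PSL2_pow[OF p1] mat2_pow_upper psl_coset_eq_one_iff[OF p1])
  have c: "psl_coset p (2, 0, 0, q) \<in> carrier (PSL2 p)"
    using q by (simp add: psl_coset_in_carrier[OF p1])
  have "psl_coset p (2, 0, 0, q) \<otimes>\<^bsub>PSL2 p\<^esub> psl_coset p (1, b, 0, 1) \<otimes>\<^bsub>PSL2 p\<^esub>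
          inv\<^bsub>PSL2 p\<^esub> psl_coset p (2, 0, 0, q) = psl_coset p (2 * q, 4 * b, 0, 2 * q)"
    using q by (simp add: PSL2_inv[OF p1] PSL2_mult[OF p1] algebra_simps)
  also have "\<dots> = psl_coset p (1, b, 0, 1) [^]\<^bsub>PSL2 p\<^esub> (4::nat)"
    using q by (simp add: PSL2_pow[OF p1] mat2_pow_upper psl_coset_eq_iff mod_eq_dvd_iff)
  finally show ?thesis
    using c pow_ne by (auto simp: unipotent_like_def psl_coset_in_carrier[OF p1])
qed

lemma unipotent_like_lower:
  assumes c: "\<not> int p dvd c"
  shows "unipotent_like (PSL2 p) (psl_coset p (1, 0, c, 1))"
proof -
  have p1: "1 < p" and p_int: "Factorial_Ring.prime (int p)"
    using p prime_gt_1_nat by auto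
  have "odd p" using p p5 prime_odd_nat by auto
  then obtain q where q: "int p dvd 2 * q - 1" by (rule inverse_of_two_mod)
  have "\<not> int p dvd int n * c" if "0 < n" "n < 6" for n :: nat
    using c zdvd_not_zless[of "int n" "int p"] that p5
    by (simp add: prime_dvd_mult_iff[OF p_int])
  then have pow_ne: "psl_coset p (1, 0, c, 1) [^]\<^bsub>PSL2 p\<^esub> n \<noteq> \<one>\<^bsub>PSL2 p\<^esub>"
    if "0 < n" "n < 6" for n :: nat
    using that by (simp add: PSL2_pow[OF p1] mat2_pow_lower psl_coset_eq_one_iff[OF p1])
  have d: "psl_coset p (q, 0, 0, 2) \<in> carrier (PSL2 p)"
    using q by (simp add: psl_coset_in_carrier[OF p1] mult.commute)
  have "psl_coset p (q, 0, 0, 2) \<otimes>\<^bsub>PSL2 p\<^esub> psl_coset p (1, 0, c, 1) \<otimes>\<^bsub>PSL2 p\<^esub>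
          inv\<^bsub>PSL2 p\<^esub> psl_coset p (q, 0, 0, 2) = psl_coset p (2 * q, 0, 4 * c, 2 * q)"
    using q by (simp add: PSL2_inv[OF p1] PSL2_mult[OF p1] algebra_simps)
  also have "\<dots> = psl_coset p (1, 0, c, 1) [^]\<^bsub>PSL2 p\<^esub> (4::nat)"
    using q by (simp add: PSL2_pow[OF p1] mat2_pow_lower psl_coset_eq_iff mod_eq_dvd_iff)
  finally show ?thesis
    using d pow_ne by (auto simp: unipotent_like_def psl_coset_in_carrier[OF p1])
qed

lemma unipotent_pair_product_G0: "unipotent_pair_product (PSL2 p) (psl_coset p G0)"
proof -
  have p1: "1 < p" using p prime_gt_1_nat by auto
  have not_dvd: "\<not> int p dvd 1" "\<not> int p dvd 2"
    using p5 zdvd_not_zless[of _ "int p"] by auto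
  let ?u = "psl_coset p (1, 1, 0, 1)" and ?w = "psl_coset p (1, 0, 2, 1)"
  have "?u \<otimes>\<^bsub>PSL2 p\<^esub> inv\<^bsub>PSL2 p\<^esub> ?w = psl_coset p (-1, 1, -2, 1)"
    by (simp add: PSL2_inv[OF p1] PSL2_mult[OF p1])
  moreover have "psl_coset p (-1, 1, -2, 1) [^]\<^bsub>PSL2 p\<^esub> (2::nat) = \<one>\<^bsub>PSL2 p\<^esub>"
    unfolding PSL2_pow[OF p1] by (simp add: numeral_eq_Suc mat2_one_def psl_coset_eq_one_iff[OF p1])
  moreover have "psl_coset p (-1, 1, -2, 1) \<noteq> \<one>\<^bsub>PSL2 p\<^esub>"
    using not_dvd by (simp add: psl_coset_eq_one_iff[OF p1])
  moreover have "psl_coset p G0 = ?u \<otimes>\<^bsub>PSL2 p\<^esub> ?w"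
    by (simp add: G0_def PSL2_mult[OF p1])
  ultimately show ?thesis
    unfolding unipotent_pair_product_def
    using unipotent_like_upper unipotent_like_lower not_dvd by metis
qed

lemma psl_coset_lin_G0:
  assumes det: "\<alpha>^2 + 4 * \<alpha> * \<beta> + \<beta>^2 = 1"
    and tr: "int p dvd 4 * \<alpha> + 2 * \<beta> - 4 \<or> int p dvd 4 * \<alpha> + 2 * \<beta> + 4"
  shows "psl_coset p (mat2_lin \<alpha> \<beta> G0) = psl_coset p G0 \<or>
         psl_coset p (mat2_lin \<alpha> \<beta> G0) = psl_coset p (mat2_adj G0)"
proof -
  have p_int: "Factorial_Ring.prime (int p)" using p by simp
  have not_dvd: "\<not> int p dvd 2" "\<not> int p dvd 3"
    using p5 zdvd_not_zless[of _ "int p"] by auto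
  have "4 * \<alpha> + 2 * \<beta> - 4 = 2 * (2 * \<alpha> + \<beta> - 2)" "4 * \<alpha> + 2 * \<beta> + 4 = 2 * (2 * \<alpha> + \<beta> + 2)"
    by simp_all
  then have s: "int p dvd 2 * \<alpha> + \<beta> - 2 \<or> int p dvd 2 * \<alpha> + \<beta> + 2"
    using tr not_dvd prime_dvd_mult_iff[OF p_int] by metis
  \<comment> \<open>\<open>\<alpha>\<^sup>2 + 4\<alpha>\<beta> + \<beta>\<^sup>2 = (2\<alpha> + \<beta>)\<^sup>2 - 3\<alpha>\<^sup>2\<close>\<close>
  then have "int p dvd 3 * ((\<alpha> - 1) * (\<alpha> + 1))"
    using det unfolding dvd_def by (elim disjE) Groebner_Basis.algebra+
  then have r: "int p dvd \<alpha> - 1 \<or> int p dvd \<alpha> + 1"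
    using not_dvd by (simp add: prime_dvd_mult_iff[OF p_int])
  have adj: "mat2_adj G0 = mat2_lin (-1) 4 G0"
    by (simp add: G0_def)
  from r s consider
      (plus_G0) "int p dvd \<alpha> - 1" "int p dvd 2 * \<alpha> + \<beta> - 2"
    | (minus_adj) "int p dvd \<alpha> - 1" "int p dvd 2 * \<alpha> + \<beta> + 2"
    | (plus_adj) "int p dvd \<alpha> + 1" "int p dvd 2 * \<alpha> + \<beta> - 2"
    | (minus_G0) "int p dvd \<alpha> + 1" "int p dvd 2 * \<alpha> + \<beta> + 2"
    by blast
  then show ?thesis
  proof cases
    case plus_G0
    then have "int p dvd \<beta> - 0" unfolding dvd_def by Groebner_Basis.algebra
    then show ?thesis using plus_G0 psl_coset_lin_cong[of p \<alpha> 1 \<beta> 0 G0] by simp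
  next
    case minus_adj
    then have "int p dvd \<beta> + 4" unfolding dvd_def by Groebner_Basis.algebra
    then show ?thesis using minus_adj psl_coset_lin_cong[of p \<alpha> "-1" \<beta> 4 G0] by (simp add: adj)
  next
    case plus_adj
    then have "int p dvd \<beta> - 4" unfolding dvd_def by Groebner_Basis.algebra
    then show ?thesis using plus_adj psl_coset_lin_cong[of p \<alpha> "-1" \<beta> 4 G0] by (simp add: adj)
  next
    case minus_G0
    then have "int p dvd \<beta> + 0" unfolding dvd_def by Groebner_Basis.algebra
    then show ?thesis using minus_G0 psl_coset_lin_cong[of p \<alpha> 1 \<beta> 0 G0] by simp
  qed
qed

lemma psl_coset_G0_pow_cases:
  assumes tr: "int p dvd mat2_trace (mat2_pow G0 k) - 4 \<or> int p dvd mat2_trace (mat2_pow G0 k) + 4"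
  shows "psl_coset p (mat2_pow G0 k) = psl_coset p G0 \<or>
         psl_coset p (mat2_pow G0 k) = psl_coset p (mat2_adj G0)"
proof (cases "k = 0")
  case True
  have p_int: "Factorial_Ring.prime (int p)" using p by simp
  have not_dvd: "\<not> int p dvd 2" "\<not> int p dvd 3"
    using p5 zdvd_not_zless[of _ "int p"] by auto
  then have "\<not> int p dvd 6" using prime_dvd_mult_iff[OF p_int, of 2 3] by simp
  with tr True not_dvd show ?thesis by (simp add: mat2_one_def)
next
  case False
  define \<alpha> \<beta> where "\<alpha> = lucas_U 4 1 k" and "\<beta> = - lucas_U 4 1 (k - 1)"
  have pow: "mat2_pow G0 k = mat2_lin \<alpha> \<beta> G0"
    using False by (simp add: mat2_pow_lucas \<alpha>_def \<beta>_def G0_def)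
  have "mat2_det (mat2_pow G0 k) = 1"
    by (simp add: mat2_det_pow G0_def)
  then have "\<alpha>^2 + 4 * \<alpha> * \<beta> + \<beta>^2 = 1"
    unfolding pow mat2_det_lin by (simp add: G0_def algebra_simps)
  moreover have "mat2_trace (mat2_pow G0 k) = 4 * \<alpha> + 2 * \<beta>"
    unfolding pow mat2_trace_lin by (simp add: G0_def)
  then have "int p dvd 4 * \<alpha> + 2 * \<beta> - 4 \<or> int p dvd 4 * \<alpha> + 2 * \<beta> + 4"
    using tr by simp
  ultimately show ?thesis
    unfolding pow by (rule psl_coset_lin_G0)
qed


lemma iso_image_psl_coset_G0:
  assumes \<alpha>: "\<alpha> \<in> iso (PSL2 p) (PSL2 p)"
    and \<alpha>_g: "\<alpha> (psl_coset p G0) = psl_coset p G0 [^]\<^bsub>PSL2 p\<^esub> (k::nat)"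
  shows "psl_coset p G0 [^]\<^bsub>PSL2 p\<^esub> k = psl_coset p G0 \<or>
         psl_coset p G0 [^]\<^bsub>PSL2 p\<^esub> k = inv\<^bsub>PSL2 p\<^esub> (psl_coset p G0)"
proof -
  have p1: "1 < p" using p prime_gt_1_nat by auto
  interpret PSL2: group "PSL2 p" by (rule group_PSL2[OF p1])
  interpret \<alpha>: group_hom "PSL2 p" "PSL2 p" \<alpha>
    using \<alpha> by (simp add: group_hom_def group_hom_axioms_def iso_def PSL2.is_group)
  have det: "int p dvd mat2_det (mat2_pow G0 k) - 1"
    by (simp add: mat2_det_pow G0_def)
  have "unipotent_pair_product (PSL2 p) (psl_coset p (mat2_pow G0 k))"
    using \<alpha>.unipotent_pair_product_inj_image[OF _ unipotent_pair_product_G0] \<alpha> \<alpha>_g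
    by (simp add: iso_def bij_betw_def PSL2_pow[OF p1])
  then have "int p dvd mat2_trace (mat2_pow G0 k) - 4 \<or> int p dvd mat2_trace (mat2_pow G0 k) + 4"
    by (rule unipotent_pair_product_trace[OF p det])
  then show ?thesis
    using psl_coset_G0_pow_cases by (simp add: PSL2_pow[OF p1] PSL2_inv[OF p1] G0_def)
qed
end

lemma psl_coset_G0_pow_ne_one:
  assumes p: "Factorial_Ring.prime p" and p13: "13 < p"
  shows "psl_coset p G0 [^]\<^bsub>PSL2 p\<^esub> (4::nat) \<noteq> \<one>\<^bsub>PSL2 p\<^esub>"
    and "psl_coset p G0 [^]\<^bsub>PSL2 p\<^esub> (6::nat) \<noteq> \<one>\<^bsub>PSL2 p\<^esub>"
proof -
  have p1: "1 < p" and p_int: "Factorial_Ring.prime (int p)"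
    using p prime_gt_1_nat by auto
  have small: "\<not> int p dvd m" if "0 < m" "m \<le> 13" for m :: int
    using p13 that zdvd_not_zless[of m "int p"] by simp
  have "\<not> int p dvd 8 * 7" "\<not> int p dvd 12 * 5 * 13"
    using small by (simp_all only: prime_dvd_mult_iff[OF p_int]) simp_all
  then show "psl_coset p G0 [^]\<^bsub>PSL2 p\<^esub> (4::nat) \<noteq> \<one>\<^bsub>PSL2 p\<^esub>"
    and "psl_coset p G0 [^]\<^bsub>PSL2 p\<^esub> (6::nat) \<noteq> \<one>\<^bsub>PSL2 p\<^esub>"
    unfolding PSL2_pow[OF p1]
    by (simp_all add: G0_def numeral_eq_Suc mat2_one_def psl_coset_eq_one_iff[OF p1])
qed

section \<open>Generators of cyclic subgroups\<close>

lemma coprime_if_mult_eq_Suc: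
  assumes "(a::nat) * x = Suc (b * y)"
  shows "coprime a b"
proof (rule coprimeI)
  fix c assume "c dvd a" and "c dvd b"
  then have "c dvd b * y + 1" and "c dvd b * y"
    using assms by (metis Suc_eq_plus1 dvd_mult2, simp)
  then show "is_unit c"
    using dvd_add_right_iff[of c "b * y" 1] by auto
qed

lemma exists_coprime_between:
  assumes n5: "5 \<le> n" and n6: "n \<noteq> 6"
  obtains k :: nat where "coprime k n" and "2 \<le> k" and "k + 2 \<le> n"
proof -
  define m where "m = n div 4"
  have "odd n \<or> n = 4 * m \<or> n = 4 * m + 2" unfolding m_def by presburger
  then consider (odd) "odd n" | (zero) "n = 4 * m" | (two) "n = 4 * m + 2" by blast
  then show ?thesis
  proof cases
    case odd
    then show ?thesis using n5 by (intro that[of 2]) simp_all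
  next
    case zero
    have "(2 * m + 1) * (2 * m + 1) = Suc (n * (m + 1))"
      by (simp add: zero algebra_simps)
    then have "coprime (2 * m + 1) n" by (rule coprime_if_mult_eq_Suc)
    moreover have "2 \<le> m" using n5 zero by presburger
    ultimately show ?thesis using zero by (intro that[of "2 * m + 1"]) simp_all
  next
    case two
    have "(2 * m + 3) * (m + 1) = Suc ((2 * m + 1) * (m + 2))"
      by (simp add: algebra_simps)
    then have "coprime (2 * m + 3) (2 * m + 1)" by (rule coprime_if_mult_eq_Suc)
    moreover have "coprime (2 * m + 3) 2" by simp
    ultimately have "coprime (2 * m + 3) (2 * (2 * m + 1))"
      by (simp only: coprime_mult_right_iff)
    moreover have "n = 2 * (2 * m + 1)" using two by simp
    ultimately have "coprime (2 * m + 3) n" by (simp only:)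
    moreover have "2 \<le> m" using n5 n6 two by presburger
    ultimately show ?thesis using two by (intro that[of "2 * m + 3"]) simp_all
  qed
qed

lemma (in group) exists_generator_pow_ne:
  assumes fin: "finite (carrier G)" and g: "g \<in> carrier G"
    and g4: "g [^] (4::nat) \<noteq> \<one>" and g6: "g [^] (6::nat) \<noteq> \<one>"
  obtains k :: nat where "generate G {g [^] k} = generate G {g}" and "g [^] k \<noteq> g" and "g [^] k \<noteq> inv g"
proof -
  have "\<not> ord g dvd 4" "\<not> ord g dvd 6"
    using g4 g6 pow_eq_id[OF g] by auto
  then have "ord g \<notin> {1, 2, 3, 4, 6}" by auto
  then have "5 \<le> ord g" "ord g \<noteq> 6"
    using ord_ge_1[OF fin g] by auto
  then obtain k where k: "coprime k (ord g)" "2 \<le> k" "k + 2 \<le> ord g"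
    by (rule exists_coprime_between)
  have k_range: "k \<le> ord g - 1" "Suc k \<le> ord g - 1" using k by auto
  have gk: "g [^] k \<in> carrier G" using g by simp
  have "g [^] k \<in> generate G {g}"
    using generate_pow_on_finite_carrier[OF fin g] by blast
  then have "generate G {g [^] k} \<subseteq> generate G {g}"
    using g by (intro generate_subgroup_incl generate_is_subgroup) auto
  moreover have "card (generate G {g [^] k}) = card (generate G {g})"
    using k(1) pow_ord_eq_ord_iff[OF fin g] by (simp flip: generate_pow_card[OF g] generate_pow_card[OF gk])
  moreover have "finite (generate G {g})"
    using fin generate_incl[of "{g}"] g finite_subset by blast
  ultimately have "generate G {g [^] k} = generate G {g}"
    by (rule card_subset_eq[rotated])
  moreover have "g [^] k \<noteq> g"
  proof
    assume "g [^] k = g"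
    then have eq: "g [^] k = g [^] (1::nat)" using g by simp
    have "k = 1" using inj_onD[OF ord_inj[OF g] eq] k_range by auto
    with k show False by simp
  qed
  moreover have "g [^] k \<noteq> inv g"
  proof
    assume "g [^] k = inv g"
    then have eq: "g [^] Suc k = g [^] (0::nat)" using g by simp
    have "Suc k = 0" using inj_onD[OF ord_inj[OF g] eq] k_range by auto
    then show False by simp
  qed
  ultimately show ?thesis by (intro that) simp_all
qed

theorem mainTheorem8:
  fixes p :: nat
  assumes "Factorial_Ring.prime p" and "p \<ge> 17"
  shows "\<not> amit_vishne (PSL2 p)"
proof
  assume av: "amit_vishne (PSL2 p)"
  have p1: "1 < p" and p5: "5 < p" and p13: "13 < p" using assms(2) by simp_all
  interpret PSL2: group "PSL2 p" by (rule group_PSL2[OF p1])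
  let ?g = "psl_coset p G0"
  have g: "?g \<in> carrier (PSL2 p)"
    by (rule psl_coset_in_carrier[OF p1]) (simp add: G0_def)
  obtain k :: nat where gen: "generate (PSL2 p) {?g [^]\<^bsub>PSL2 p\<^esub> k} = generate (PSL2 p) {?g}"
    and ne: "?g [^]\<^bsub>PSL2 p\<^esub> k \<noteq> ?g" "?g [^]\<^bsub>PSL2 p\<^esub> k \<noteq> inv\<^bsub>PSL2 p\<^esub> ?g"
    by (rule PSL2.exists_generator_pow_ne[OF finite_PSL2_carrier[OF p1] g
        psl_coset_G0_pow_ne_one[OF assms(1) p13]])
  have "?g [^]\<^bsub>PSL2 p\<^esub> k \<in> carrier (PSL2 p)" using g by simp
  then obtain \<alpha> where "\<alpha> \<in> iso (PSL2 p) (PSL2 p)" and "\<alpha> ?g = ?g [^]\<^bsub>PSL2 p\<^esub> k"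
    using av[unfolded amit_vishne_def, rule_format, OF g _ gen[symmetric]] by blast
  then have "?g [^]\<^bsub>PSL2 p\<^esub> k = ?g \<or> ?g [^]\<^bsub>PSL2 p\<^esub> k = inv\<^bsub>PSL2 p\<^esub> ?g"
    by (rule iso_image_psl_coset_G0[OF assms(1) p5])
  with ne show False by blast
qed

end
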